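(* Let $D$ be any tangle diagram and let $i\mapsto(g_i,L_i)$ be any decorated $\mathrm{SL}_2(\mathbb{C})$-coloring of $D$, corresponding to a decorated representation $\rho$. Then there exist $h\in\mathrm{SL}_2(\mathbb{C})$ and a shadow coloring $j\mapsto u_j$ of the conjugated decorated coloring $i\mapsto(h^{-1}g_ih,\,L_ih)$ such that the resulting decorated shadow coloring is admissible.
   Context: Tangle diagrams: a tangle diagram $D$ is an oriented tangle diagram in the square $[0,1]^2$, drawn with strands running from left to right, and viewed as a 4-valent graph with over/under information at each crossing. Segments are the edges of this graph; a strand is cut at every crossing, whether it passes over or under there. Regions are the connected components of the complement of the graph in the square. Above and below: for a segment $i$, $i^{\uparrow}$ is the region on the left of $i$ with respect to its orientation and $i^{\downarrow}$ the region on its right. Crossing labels: rotate a crossing so that both strands point to the right. The incoming segments are $1$ (upper left) and $2$ (lower left). The outgoing segments are $1'$ (lower right, continuing $1$) and $2'$ (upper right, continuing $2$). The crossing is positive if strand $1\to1'$ is over and negative if strand $2\to2'$ is over. Decorated $\mathrm{SL}_2(\mathbb{C})$-coloring: assign to each segment $i$ a matrix $g_i\in\mathrm{SL}_2(\mathbb{C})$ and a line $L_i\subset\mathbb{C}^2$ of row vectors with $L_ig_i=L_i$, such that: - at positive crossings, $g_{1'}=g_1$, $g_{2'}=g_1^{-1}g_2g_1$, $L_{1'}=L_1$ and $L_{2'}=L_2g_1$; - at negative crossings, $g_{2'}=g_2$, $g_{1'}=g_2g_1g_2^{-1}$, $L_{2'}=L_2$ and $L_{1'}=L_1g_2^{-1}$.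 Such colorings are equivalent to decorated representations of the Wirtinger presentation of the tangle group, i.e. representations $\rho$ into $\mathrm{SL}_2(\mathbb{C})$ together with a choice of invariant line for the meridians. Shadow coloring: assign a nonzero column vector $u_j\in\mathbb{C}^2$ to each region with $u_{i^{\downarrow}}=g_iu_{i^{\uparrow}}$ for every segment $i$. Admissibility: with $e_2=(0,1)^T$ and nonzero $v_i\in L_i$, the decorated shadow coloring is admissible if $\det(u_j,e_2)\ne0$ for every region $j$ and $v_ie_2\neq0$, $v_iu_{i^{\uparrow}}\neq0$ for every segment $i$. Here $\det(x,y)$ is the determinant of the matrix with columns $x,y$. *)

theory Defs
  imports "HOL-Analysis.Analysis"
begin

text \<open>Linear algebra: 2x2 complex matrices act on column vectors (complex^2) from the
left and on row vectors (also complex^2) from the right.\<close>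

type_synonym mat2 = "complex^2^2"
type_synonym vec2 = "complex^2"

definition SL2 :: "mat2 set" where
  "SL2 = {g. det g = 1}"

definition is_line :: "vec2 set \<Rightarrow> bool" where
  "is_line L \<longleftrightarrow> (\<exists>v. v \<noteq> 0 \<and> L = {c *s v | c. True})"

definition line_act :: "vec2 set \<Rightarrow> mat2 \<Rightarrow> vec2 set" where
  "line_act L g = (\<lambda>v. v v* g) ` L"

definition pair :: "vec2 \<Rightarrow> vec2 \<Rightarrow> complex" where
  "pair v u = (\<Sum>i\<in>UNIV. v $ i * u $ i)"

definition e2 :: vec2 where
  "e2 = vector [0, 1]"

definition det_cols :: "vec2 \<Rightarrow> vec2 \<Rightarrow> complex" where
  "det_cols x y = det (\<chi> i j. if j = 1 then x $ i else y $ i)"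

text \<open>A tangle diagram in [0,1]^2 (strands ending on the left and right edges) is
encoded, up to planar isotopy, by its Morse decomposition in the horizontal (x) direction:
a list of boundary orientations on the left edge and a word of elementary events.
At each generic vertical level the diagram meets a vertical line in n points, indexed
0..n-1 from bottom to top; each carries an orientation (True = pointing right,
False = pointing left).  The gaps (regions met by the vertical line) are indexed
0..n, gap j lying between point j-1 and point j (gap 0 at the bottom, gap n at the top).

Events:
 \<^item> Xing k aover: points k and k+1 cross; strand A goes from left point k to right point
   k+1, strand B from left point k+1 to right point k; aover says whether A is the
   over-strand.
 \<^item> Birth k ob: two new points are created at positions k, k+1 (a local minimum in x,
   an arc opening to the right), with orientations ob and (not ob).
 \<^item> Death k: points k and k+1 (of opposite orientation) are joined by an arc and
   disappear (a local maximum in x).\<close>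

datatype elem = Xing nat bool | Birth nat bool | Death nat

fun step :: "bool list \<Rightarrow> elem \<Rightarrow> bool list" where
  "step os (Xing k ov) = os[k := os ! (k+1), k+1 := os ! k]"
| "step os (Birth k ob) = take k os @ [ob, \<not> ob] @ drop k os"
| "step os (Death k) = take k os @ drop (k+2) os"

fun valid_elem :: "bool list \<Rightarrow> elem \<Rightarrow> bool" where
  "valid_elem os (Xing k ov) = (k + 1 < length os)"
| "valid_elem os (Birth k ob) = (k \<le> length os)"
| "valid_elem os (Death k) = (k + 1 < length os \<and> os ! k \<noteq> os ! (k+1))"

text \<open>Orientations of the points at level t (level t lies between event t-1 and event t;
levels are 0..length w).\<close>
definition ori :: "bool list \<Rightarrow> elem list \<Rightarrow> nat \<Rightarrow> bool list" where
  "ori os0 w t = foldl step os0 (take t w)"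

definition wf_diagram :: "bool list \<Rightarrow> elem list \<Rightarrow> bool" where
  "wf_diagram os0 w \<longleftrightarrow> (\<forall>t<length w. valid_elem (ori os0 w t) (w ! t))"

text \<open>Segments are represented by their intersection points (t,p) with the levels
(every segment meets some level); data on segments is given as functions of (t,p)
that are constant along each segment (enforced by the transition conditions below).
Similarly regions are represented by the gaps (t,j).

Above/below: for a point p oriented to the right, the region on its left is the gap
above it (p+1); for a point oriented to the left, it is the gap below it (p).\<close>

definition up_gap :: "bool list \<Rightarrow> nat \<Rightarrow> nat" where
  "up_gap os p = (if os ! p then p + 1 else p)"

definition down_gap :: "bool list \<Rightarrow> nat \<Rightarrow> nat" where
  "down_gap os p = (if os ! p then p else p + 1)"

text \<open>Crossing labels (1, 2, 1', 2') at a crossing between level t and t+1 at points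
k,k+1, where a, b are the orientations of strands A and B (obtained by rotating the
crossing so that both strands point right).\<close>
definition xing_segs :: "nat \<Rightarrow> nat \<Rightarrow> bool \<Rightarrow> bool \<Rightarrow>
    (nat \<times> nat) \<times> (nat \<times> nat) \<times> (nat \<times> nat) \<times> (nat \<times> nat)" where
  "xing_segs t k a b =
    (if a \<and> b then ((t, k+1), (t, k), (t+1, k), (t+1, k+1))
     else if \<not> a \<and> \<not> b then ((t+1, k), (t+1, k+1), (t, k+1), (t, k))
     else if a then ((t, k), (t+1, k), (t+1, k+1), (t, k+1))
     else ((t+1, k+1), (t, k+1), (t, k), (t+1, k)))"

text \<open>The crossing is positive iff strand 1 -> 1' is the over-strand; strand 1 is B
when a = b and A otherwise.\<close>
definition xing_positive :: "bool \<Rightarrow> bool \<Rightarrow> bool \<Rightarrow> bool" where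
  "xing_positive a b aover = (if a = b then \<not> aover else aover)"

fun event_ok :: "bool list \<Rightarrow> nat \<Rightarrow> elem \<Rightarrow> (nat \<times> nat \<Rightarrow> mat2) \<Rightarrow>
    (nat \<times> nat \<Rightarrow> vec2 set) \<Rightarrow> bool" where
  "event_ok os t (Xing k ov) G L =
     ((\<forall>p<length os. p \<noteq> k \<and> p \<noteq> k + 1 \<longrightarrow> G (t+1, p) = G (t, p) \<and> L (t+1, p) = L (t, p)) \<and>
      (case xing_segs t k (os ! k) (os ! (k+1)) of (s1, s2, s1', s2') \<Rightarrow>
        (if xing_positive (os ! k) (os ! (k+1)) ov
         then G s1' = G s1 \<and> G s2' = matrix_inv (G s1) ** G s2 ** G s1 \<and>
              L s1' = L s1 \<and> L s2' = line_act (L s2) (G s1)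
         else G s2' = G s2 \<and> G s1' = G s2 ** G s1 ** matrix_inv (G s2) \<and>
              L s2' = L s2 \<and> L s1' = line_act (L s1) (matrix_inv (G s2)))))"
| "event_ok os t (Birth k ob) G L =
     ((\<forall>p<length os. (p < k \<longrightarrow> G (t+1, p) = G (t, p) \<and> L (t+1, p) = L (t, p)) \<and>
                     (k \<le> p \<longrightarrow> G (t+1, p+2) = G (t, p) \<and> L (t+1, p+2) = L (t, p))) \<and>
      G (t+1, k) = G (t+1, k+1) \<and> L (t+1, k) = L (t+1, k+1))"
| "event_ok os t (Death k) G L =
     ((\<forall>p<length os. (p < k \<longrightarrow> G (t+1, p) = G (t, p) \<and> L (t+1, p) = L (t, p)) \<and>
                     (k + 2 \<le> p \<longrightarrow> G (t+1, p-2) = G (t, p) \<and> L (t+1, p-2) = L (t, p))) \<and>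
      G (t, k) = G (t, k+1) \<and> L (t, k) = L (t, k+1))"

definition decorated_coloring :: "bool list \<Rightarrow> elem list \<Rightarrow> (nat \<times> nat \<Rightarrow> mat2) \<Rightarrow>
    (nat \<times> nat \<Rightarrow> vec2 set) \<Rightarrow> bool" where
  "decorated_coloring os0 w G L \<longleftrightarrow>
     (\<forall>t\<le>length w. \<forall>p<length (ori os0 w t).
        G (t, p) \<in> SL2 \<and> is_line (L (t, p)) \<and> line_act (L (t, p)) (G (t, p)) = L (t, p)) \<and>
     (\<forall>t<length w. event_ok (ori os0 w t) t (w ! t) G L)"

fun gaps_ok :: "bool list \<Rightarrow> nat \<Rightarrow> elem \<Rightarrow> (nat \<times> nat \<Rightarrow> vec2) \<Rightarrow> bool" where
  "gaps_ok os t (Xing k ov) U = (\<forall>j\<le>length os. j \<noteq> k + 1 \<longrightarrow> U (t+1, j) = U (t, j))"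
| "gaps_ok os t (Birth k ob) U =
     (\<forall>j\<le>length os. (j \<le> k \<longrightarrow> U (t+1, j) = U (t, j)) \<and> (k \<le> j \<longrightarrow> U (t+1, j+2) = U (t, j)))"
| "gaps_ok os t (Death k) U =
     (\<forall>j\<le>length os. (j \<le> k \<longrightarrow> U (t+1, j) = U (t, j)) \<and> (k + 2 \<le> j \<longrightarrow> U (t+1, j-2) = U (t, j)))"

definition shadow_coloring :: "bool list \<Rightarrow> elem list \<Rightarrow> (nat \<times> nat \<Rightarrow> mat2) \<Rightarrow>
    (nat \<times> nat \<Rightarrow> vec2) \<Rightarrow> bool" where
  "shadow_coloring os0 w G U \<longleftrightarrow>
     (\<forall>t\<le>length w.
        (\<forall>j\<le>length (ori os0 w t). U (t, j) \<noteq> 0) \<and>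
        (\<forall>p<length (ori os0 w t).
           U (t, down_gap (ori os0 w t) p) = G (t, p) *v U (t, up_gap (ori os0 w t) p))) \<and>
     (\<forall>t<length w. gaps_ok (ori os0 w t) t (w ! t) U)"

definition admissible :: "bool list \<Rightarrow> elem list \<Rightarrow> (nat \<times> nat \<Rightarrow> vec2 set) \<Rightarrow>
    (nat \<times> nat \<Rightarrow> vec2) \<Rightarrow> bool" where
  "admissible os0 w L U \<longleftrightarrow>
     (\<forall>t\<le>length w.
        (\<forall>j\<le>length (ori os0 w t). det_cols (U (t, j)) e2 \<noteq> 0) \<and>
        (\<forall>p<length (ori os0 w t). \<forall>v\<in>L (t, p). v \<noteq> 0 \<longrightarrow>
           pair v e2 \<noteq> 0 \<and> pair v (U (t, up_gap (ori os0 w t) p)) \<noteq> 0))"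

end

(* The shadow condition at a
   point determines the colour of the gap above it from the colour of the gap below it by a
   transfer matrix, g or g^-1 according to the orientation of the point, so the colour of gap j
   must be P_j u_0, where P_j is the ordered product of the transfer matrices below it and u_0 is
   the colour of the bottom (unbounded) region.  The Wirtinger relation g_1' g_2' = g_2 g_1 at a
   crossing, and the cancellation g g^-1 of the two new or vanishing points at a birth or death,
   show that these products agree on both sides of every event; hence every u_0 <> 0 gives a
   shadow coloring.

   Admissibility then excludes only finitely many choices.  The conditions v_i u_{i^up} <> 0 are
   finitely many nonzero linear forms in u_0 = (1, z_1).  Conjugating by the shear
   h = [[1, z], [0, 1]] leaves v_i u_{i^up} unchanged and turns det(u_j, e_2) <> 0 and
   v_i e_2 <> 0 into finitely many nonvanishing affine functions of z. *)
theory Submission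
  imports Defs
begin

lemma
  fixes A :: "'a::semiring_1^'n^'m"
  assumes "invertible A"
  shows matrix_inv_right: "A ** matrix_inv A = mat 1"
    and matrix_inv_left: "matrix_inv A ** A = mat 1"
proof -
  have "\<exists>A'. A ** A' = mat 1 \<and> A' ** A = mat 1"
    using assms invertible_def by blast
  then have "A ** matrix_inv A = mat 1 \<and> matrix_inv A ** A = mat 1"
    unfolding matrix_inv_def by (rule someI_ex)
  then show "A ** matrix_inv A = mat 1" "matrix_inv A ** A = mat 1"
    by auto
qed

lemma invertible_matrix_inv:
  fixes A :: "'a::semiring_1^'n^'m"
  assumes "invertible A"
  shows "invertible (matrix_inv A)"
  using matrix_inv_right[OF assms] matrix_inv_left[OF assms] invertible_def by blast

lemma matrix_inv_unique:
  fixes A :: "'a::semiring_1^'n^'m"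
  assumes "A ** B = mat 1" and "B ** A = mat 1"
  shows "matrix_inv A = B"
proof -
  have "invertible A"
    using assms invertible_def by blast
  then show ?thesis
    by (metis assms(1) matrix_inv_left matrix_mul_assoc matrix_mul_lid matrix_mul_rid)
qed

lemma matrix_inv_mult:
  fixes A :: "'a::semiring_1^'n^'m" and B :: "'a^'k^'n"
  assumes "invertible A" and "invertible B"
  shows "matrix_inv (A ** B) = matrix_inv B ** matrix_inv A"
proof (rule matrix_inv_unique)
  show "A ** B ** (matrix_inv B ** matrix_inv A) = mat 1"
    by (metis assms matrix_inv_right matrix_mul_assoc matrix_mul_rid)
  show "matrix_inv B ** matrix_inv A ** (A ** B) = mat 1"
    by (metis assms matrix_inv_left matrix_mul_assoc matrix_mul_lid)
qed

lemma matrix_inv_mult_eq_mult_matrix_inv: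
  fixes x y z w :: "'a::semiring_1^'n^'n"
  assumes "invertible x" and "invertible w" and "x ** y = z ** w"
  shows "matrix_inv x ** z = y ** matrix_inv w"
proof -
  have "matrix_inv x ** z = matrix_inv x ** (z ** w) ** matrix_inv w"
    by (metis assms(2) matrix_inv_right matrix_mul_assoc matrix_mul_rid)
  also have "\<dots> = y ** matrix_inv w"
    by (metis assms(1,3) matrix_inv_left matrix_mul_assoc matrix_mul_lid)
  finally show ?thesis .
qed

lemma SL2_invertible: "g \<in> SL2 \<Longrightarrow> invertible g"
  by (simp add: SL2_def invertible_det_nz)

lemma invertible_mult_vector_nonzero:
  fixes M :: "'a::field^'n^'n"
  assumes "invertible M" and "u \<noteq> 0"
  shows "M *v u \<noteq> 0"
  using inj_matrix_vector_mult[OF assms(1)] assms(2) by (metis injD matrix_vector_mult_0_right)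

lemma invertible_vector_mult_nonzero:
  fixes M :: "'a::field^'n^'n"
  assumes "invertible M" and "v \<noteq> 0"
  shows "v v* M \<noteq> 0"
proof
  assume "v v* M = 0"
  then have "v v* (M ** matrix_inv M) = 0"
    by (simp flip: vector_matrix_mul_assoc)
  then show False
    using assms by (simp add: matrix_inv_right)
qed

lemma ori_Suc: "t < length w \<Longrightarrow> ori os0 w (Suc t) = step (ori os0 w t) (w ! t)"
  by (simp add: ori_def take_Suc_conv_app_nth)

definition diagram_points :: "bool list \<Rightarrow> elem list \<Rightarrow> (nat \<times> nat) set" where
  "diagram_points os0 w = Sigma {..length w} (\<lambda>t. {..<length (ori os0 w t)})"

definition diagram_gaps :: "bool list \<Rightarrow> elem list \<Rightarrow> (nat \<times> nat) set" where
  "diagram_gaps os0 w = Sigma {..length w} (\<lambda>t. {..length (ori os0 w t)})"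

lemma finite_diagram_points: "finite (diagram_points os0 w)"
  by (simp add: diagram_points_def)

lemma finite_diagram_gaps: "finite (diagram_gaps os0 w)"
  by (simp add: diagram_gaps_def)

lemma up_gap_in_diagram_gaps:
  "(t, p) \<in> diagram_points os0 w \<Longrightarrow> (t, up_gap (ori os0 w t) p) \<in> diagram_gaps os0 w"
  by (simp add: diagram_points_def diagram_gaps_def up_gap_def)

lemma decorated_coloring_invertible:
  "decorated_coloring os0 w G L \<Longrightarrow> s \<in> diagram_points os0 w \<Longrightarrow> invertible (G s)"
  unfolding decorated_coloring_def diagram_points_def by (auto intro: SL2_invertible)

lemma decorated_coloring_line_generators:
  assumes "decorated_coloring os0 w G L"
  obtains V where "\<And>s. s \<in> diagram_points os0 w \<Longrightarrow> V s \<noteq> 0 \<and> L s = {c *s V s | c. True}"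
proof -
  have "\<forall>s\<in>diagram_points os0 w. \<exists>v. v \<noteq> 0 \<and> L s = {c *s v | c. True}"
    using assms unfolding decorated_coloring_def diagram_points_def is_line_def by auto
  then show thesis
    using that by metis
qed

text \<open>Solving the shadow condition at point p for the gap above it: the colour of gap p + 1
  is transfer G os t p times the colour of gap p.\<close>

definition transfer :: "(nat \<times> nat \<Rightarrow> mat2) \<Rightarrow> bool list \<Rightarrow> nat \<Rightarrow> nat \<Rightarrow> mat2" where
  "transfer G os t p = (if os ! p then matrix_inv (G (t, p)) else G (t, p))"

primrec gap_transfer :: "(nat \<times> nat \<Rightarrow> mat2) \<Rightarrow> bool list \<Rightarrow> nat \<Rightarrow> nat \<Rightarrow> mat2" where
  "gap_transfer G os t 0 = mat 1"
| "gap_transfer G os t (Suc j) = transfer G os t j ** gap_transfer G os t j"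

lemma invertible_gap_transfer:
  "(\<And>p. p < j \<Longrightarrow> invertible (G (t, p))) \<Longrightarrow> invertible (gap_transfer G os t j)"
proof (induction j)
  case 0
  then show ?case
    unfolding invertible_def by (intro exI[of _ "mat 1"]) simp
next
  case (Suc j)
  then show ?case
    by (simp add: transfer_def invertible_mult invertible_matrix_inv)
qed

lemma gap_transfer_shift:
  assumes "gap_transfer G os t (m + d) = gap_transfer G os' t' m"
    and "\<And>p. m \<le> p \<Longrightarrow> p < n \<Longrightarrow> transfer G os t (p + d) = transfer G os' t' p"
    and "m \<le> j" and "j \<le> n"
  shows "gap_transfer G os t (j + d) = gap_transfer G os' t' j"
  using assms(3,4)
proof (induction j rule: dec_induct)
  case base
  then show ?case
    using assms(1) by simp
next
  case (step j)
  then show ?case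
    using assms(2)[of j] by simp
qed

lemma transfer_cancel:
  assumes "invertible (G (t, k))" and "G (t, k + 1) = G (t, k)" and "os ! k \<noteq> os ! (k + 1)"
  shows "transfer G os t (k + 1) ** transfer G os t k = mat 1"
  using assms by (auto simp: transfer_def matrix_inv_left matrix_inv_right)

lemma event_ok_Xing_Wirtinger:
  assumes ev: "event_ok os t (Xing k ov) G L"
    and segs: "xing_segs t k (os ! k) (os ! (k + 1)) = (s1, s2, s1', s2')"
    and "invertible (G s1)" and "invertible (G s2)"
  shows "G s1' ** G s2' = G s2 ** G s1"
proof (cases "xing_positive (os ! k) (os ! (k + 1)) ov")
  case True
  then have "G s1' = G s1" and "G s2' = matrix_inv (G s1) ** G s2 ** G s1"
    using ev segs by simp_all
  then show ?thesis
    by (metis assms(3) matrix_inv_right matrix_mul_assoc matrix_mul_lid)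
next
  case False
  then have "G s2' = G s2" and "G s1' = G s2 ** G s1 ** matrix_inv (G s2)"
    using ev segs by simp_all
  then show ?thesis
    by (metis assms(4) matrix_inv_left matrix_mul_assoc matrix_mul_rid)
qed

lemma transfer_pair_Xing:
  assumes ev: "event_ok os t (Xing k ov) G L"
    and os': "os' = os[k := os ! (k + 1), k + 1 := os ! k]"
    and k: "k + 1 < length os"
    and inv: "\<And>t' p. t' \<in> {t, Suc t} \<Longrightarrow> p \<in> {k, k + 1} \<Longrightarrow> invertible (G (t', p))"
  shows "transfer G os' (Suc t) (k + 1) ** transfer G os' (Suc t) k
           = transfer G os t (k + 1) ** transfer G os t k"
proof -
  obtain s1 s2 s1' s2' where segs: "xing_segs t k (os ! k) (os ! (k + 1)) = (s1, s2, s1', s2')"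
    by (metis prod_cases4)
  have "s1 \<in> {t, Suc t} \<times> {k, k + 1}" and "s2 \<in> {t, Suc t} \<times> {k, k + 1}"
    using segs unfolding xing_segs_def by (auto split: if_splits)
  then have "G s1' ** G s2' = G s2 ** G s1"
    using event_ok_Xing_Wirtinger[OF ev segs] inv by auto
  moreover have "os' ! k = os ! (k + 1)" and "os' ! (k + 1) = os ! k"
    using k os' by auto
  \<comment> \<open>Both strands pointing right: the inverse of the Wirtinger relation; both pointing left:
    the relation itself; mixed orientations: the relation rearranged to x^-1 z = y w^-1.\<close>
  ultimately show ?thesis
    using segs inv
    by (cases "os ! k"; cases "os ! (k + 1)")
      (auto simp: xing_segs_def transfer_def matrix_inv_mult[symmetric]
        intro: matrix_inv_mult_eq_mult_matrix_inv sym[OF matrix_inv_mult_eq_mult_matrix_inv[OF _ _ sym]])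
qed

lemma gap_transfer_Xing:
  assumes ev: "event_ok os t (Xing k ov) G L"
    and os': "os' = os[k := os ! (k + 1), k + 1 := os ! k]"
    and k: "k + 1 < length os"
    and inv: "\<And>t' p. t' \<in> {t, Suc t} \<Longrightarrow> p < length os \<Longrightarrow> invertible (G (t', p))"
    and j: "j \<le> length os" "j \<noteq> k + 1"
  shows "gap_transfer G os' (Suc t) j = gap_transfer G os t j"
proof -
  have same: "transfer G os' (Suc t) p = transfer G os t p"
    if "p < length os" "p \<noteq> k" "p \<noteq> k + 1" for p
    using ev that unfolding os' by (auto simp: transfer_def)
  have below: "gap_transfer G os' (Suc t) i = gap_transfer G os t i" if "i \<le> k" for i
    using gap_transfer_shift[of G os' "Suc t" 0 0 os t k i] same k that by simp
  have "transfer G os' (Suc t) (k + 1) ** transfer G os' (Suc t) k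
          = transfer G os t (k + 1) ** transfer G os t k"
    by (rule transfer_pair_Xing[OF ev os' k]) (use inv k in auto)
  then have "gap_transfer G os' (Suc t) (k + 2) = gap_transfer G os t (k + 2)"
    using below[of k] by (simp add: matrix_mul_assoc)
  then have above: "gap_transfer G os' (Suc t) i = gap_transfer G os t i"
    if "k + 2 \<le> i" "i \<le> length os" for i
    using gap_transfer_shift[of G os' "Suc t" "k + 2" 0 os t "length os" i] same that by simp
  show ?thesis
    using below above j by (cases "j \<le> k") auto
qed

lemma gap_transfer_Birth:
  assumes ev: "event_ok os t (Birth k ob) G L"
    and os': "os' = take k os @ [ob, \<not> ob] @ drop k os"
    and k: "k \<le> length os"
    and inv: "invertible (G (Suc t, k))"
    and j: "j \<le> length os"
  shows "j \<le> k \<Longrightarrow> gap_transfer G os' (Suc t) j = gap_transfer G os t j"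
    and "k \<le> j \<Longrightarrow> gap_transfer G os' (Suc t) (j + 2) = gap_transfer G os t j"
proof -
  have below: "gap_transfer G os' (Suc t) i = gap_transfer G os t i" if "i \<le> k" for i
    using gap_transfer_shift[of G os' "Suc t" 0 0 os t k i] ev k os' that
    by (simp add: transfer_def nth_append)
  then show "j \<le> k \<Longrightarrow> gap_transfer G os' (Suc t) j = gap_transfer G os t j" .
  have "transfer G os' (Suc t) (k + 1) ** transfer G os' (Suc t) k = mat 1"
    using transfer_cancel[of G "Suc t" k os', OF inv] ev k os' by (simp add: nth_append)
  then have "gap_transfer G os' (Suc t) (k + 2) = gap_transfer G os t k"
    using below[of k] by (simp add: matrix_mul_assoc)
  moreover have "transfer G os' (Suc t) (p + 2) = transfer G os t p"
    if "k \<le> p" "p < length os" for p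
    using ev k os' that by (simp add: transfer_def nth_append)
  ultimately show "k \<le> j \<Longrightarrow> gap_transfer G os' (Suc t) (j + 2) = gap_transfer G os t j"
    using gap_transfer_shift[of G os' "Suc t" k 2 os t "length os" j] j by simp
qed

lemma gap_transfer_Death:
  assumes ev: "event_ok os t (Death k) G L"
    and os': "os' = take k os @ drop (k + 2) os"
    and k: "k + 1 < length os" and ne: "os ! k \<noteq> os ! (k + 1)"
    and inv: "invertible (G (t, k))"
    and j: "j \<le> length os"
  shows "j \<le> k \<Longrightarrow> gap_transfer G os' (Suc t) j = gap_transfer G os t j"
    and "k + 2 \<le> j \<Longrightarrow> gap_transfer G os' (Suc t) (j - 2) = gap_transfer G os t j"
proof -
  have below: "gap_transfer G os' (Suc t) i = gap_transfer G os t i" if "i \<le> k" for i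
    using gap_transfer_shift[of G os' "Suc t" 0 0 os t k i] ev k os' that
    by (simp add: transfer_def nth_append)
  then show "j \<le> k \<Longrightarrow> gap_transfer G os' (Suc t) j = gap_transfer G os t j" .
  have "transfer G os t (k + 1) ** transfer G os t k = mat 1"
    using transfer_cancel[of G t k os, OF inv] ev ne by simp
  then have "gap_transfer G os t (k + 2) = gap_transfer G os' (Suc t) k"
    using below[of k] by (simp add: matrix_mul_assoc)
  moreover have "transfer G os t (p + 2) = transfer G os' (Suc t) p"
    if "k \<le> p" "p < length os - 2" for p
  proof -
    have "\<forall>q<length os. k + 2 \<le> q \<longrightarrow> G (Suc t, q - 2) = G (t, q)"
      using ev by simp
    then have "G (Suc t, p) = G (t, p + 2)"
      using that by (metis add_diff_cancel_right' add_le_mono1 less_diff_conv)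
    then show ?thesis
      using k os' that by (simp add: transfer_def nth_append)
  qed
  ultimately have above: "gap_transfer G os t (i + 2) = gap_transfer G os' (Suc t) i"
    if "k \<le> i" "i \<le> length os - 2" for i
    using gap_transfer_shift[of G os t k 2 os' "Suc t" "length os - 2" i] that by simp
  show "gap_transfer G os' (Suc t) (j - 2) = gap_transfer G os t j" if "k + 2 \<le> j"
  proof -
    have "j - 2 + 2 = j" "k \<le> j - 2" "j - 2 \<le> length os - 2"
      using that j by auto
    then show ?thesis
      using above[of "j - 2"] by metis
  qed
qed

lemma gaps_ok_gap_transfer:
  assumes va: "valid_elem os e" and ev: "event_ok os t e G L"
    and inv: "\<And>p. p < length os \<Longrightarrow> invertible (G (t, p))"
      "\<And>p. p < length (step os e) \<Longrightarrow> invertible (G (Suc t, p))"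
    and U: "\<And>j. U (t, j) = gap_transfer G os t j *v u0"
      "\<And>j. U (Suc t, j) = gap_transfer G (step os e) (Suc t) j *v u0"
  shows "gaps_ok os t e U"
proof (cases e)
  case (Xing k ov)
  then have "invertible (G (t', p))" if "t' \<in> {t, Suc t}" "p < length os" for t' p
    using inv that by auto
  then show ?thesis
    using gap_transfer_Xing[of os t k ov G L] Xing ev va U by simp
next
  case (Birth k ob)
  then show ?thesis
    using gap_transfer_Birth[of os t k ob G L] ev va inv(2)[of k] U by simp
next
  case (Death k)
  then show ?thesis
    using gap_transfer_Death[of os t k G L] ev va inv(1)[of k] U by simp
qed

lemma shadow_coloring_gap_transfer:
  assumes wf: "wf_diagram os0 w" and dc: "decorated_coloring os0 w G L" and u0: "u0 \<noteq> 0"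
  shows "shadow_coloring os0 w G (\<lambda>(t, j). gap_transfer G (ori os0 w t) t j *v u0)"
proof -
  have inv: "invertible (G (t, p))" if "t \<le> length w" "p < length (ori os0 w t)" for t p
    using decorated_coloring_invertible[OF dc] that by (simp add: diagram_points_def)
  show ?thesis
    unfolding shadow_coloring_def
  proof (intro conjI allI impI)
    fix t j assume "t \<le> length w" "j \<le> length (ori os0 w t)"
    then show "(case (t, j) of (t, j) \<Rightarrow> gap_transfer G (ori os0 w t) t j *v u0) \<noteq> 0"
      using inv invertible_mult_vector_nonzero[OF invertible_gap_transfer u0] by simp
  next
    fix t p assume "t \<le> length w" "p < length (ori os0 w t)"
    then show "(case (t, down_gap (ori os0 w t) p) of (t, j) \<Rightarrow> gap_transfer G (ori os0 w t) t j *v u0)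
      = G (t, p) *v (case (t, up_gap (ori os0 w t) p) of (t, j) \<Rightarrow> gap_transfer G (ori os0 w t) t j *v u0)"
      using inv by (simp add: down_gap_def up_gap_def transfer_def matrix_inv_right
          matrix_vector_mul_assoc matrix_mul_assoc)
  next
    fix t assume t: "t < length w"
    show "gaps_ok (ori os0 w t) t (w ! t) (\<lambda>(t, j). gap_transfer G (ori os0 w t) t j *v u0)"
    proof (rule gaps_ok_gap_transfer)
      show "valid_elem (ori os0 w t) (w ! t)"
        using wf t unfolding wf_diagram_def by simp
      show "event_ok (ori os0 w t) t (w ! t) G L"
        using dc t unfolding decorated_coloring_def by simp
    qed (use inv t ori_Suc[OF t] in auto)
  qed
qed

lemma shadow_coloring_conj:
  assumes sc: "shadow_coloring os0 w G U" and h: "invertible h"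
  shows "shadow_coloring os0 w (\<lambda>s. matrix_inv h ** G s ** h) (\<lambda>s. matrix_inv h *v U s)"
  unfolding shadow_coloring_def
proof (intro conjI allI impI)
  fix t j assume "t \<le> length w" "j \<le> length (ori os0 w t)"
  then show "matrix_inv h *v U (t, j) \<noteq> 0"
    using sc invertible_mult_vector_nonzero[OF invertible_matrix_inv[OF h]]
    unfolding shadow_coloring_def by blast
next
  fix t p assume "t \<le> length w" "p < length (ori os0 w t)"
  then show "matrix_inv h *v U (t, down_gap (ori os0 w t) p) =
      (matrix_inv h ** G (t, p) ** h) *v (matrix_inv h *v U (t, up_gap (ori os0 w t) p))"
    using sc h unfolding shadow_coloring_def
    by (simp add: matrix_vector_mul_assoc matrix_inv_right flip: matrix_mul_assoc)
next
  fix t assume "t < length w"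
  then show "gaps_ok (ori os0 w t) t (w ! t) (\<lambda>s. matrix_inv h *v U s)"
    using sc unfolding shadow_coloring_def by (cases "w ! t") auto
qed

lemma ex_avoiding_affine_zeros:
  fixes S :: "('a::field_char_0 \<times> 'a) set"
  assumes "finite S" and "(0, 0) \<notin> S"
  shows "\<exists>z. \<forall>(a, b)\<in>S. a + b * z \<noteq> 0"
proof -
  obtain z where z: "z \<notin> (\<lambda>(a, b). - a / b) ` S"
    using ex_new_if_finite[OF infinite_UNIV_char_0] assms(1) by blast
  have "a + b * z \<noteq> 0" if "(a, b) \<in> S" for a b
  proof (cases "b = 0")
    case True
    then show ?thesis
      using that assms(2) by auto
  next
    case False
    then have "a + b * z = 0 \<Longrightarrow> z = - a / b"
      by (simp add: field_simps add_eq_0_iff)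
    then show ?thesis
      using z that by force
  qed
  then show ?thesis
    by blast
qed

lemma pair_matrix_vector_mult: "pair v (M *v u) = pair (v v* M) u"
  unfolding pair_def
  by (simp add: sum_2 vector_matrix_mult_def matrix_vector_mult_def algebra_simps)

lemma pair_scalar_mult_left: "pair (c *s v) u = c * pair v u"
  unfolding pair_def by (simp add: sum_2 algebra_simps)

lemma det_cols_e2: "det_cols x e2 = x $ 1"
  unfolding det_cols_def e2_def by (simp add: det_2)

lemma pair_e2: "pair v e2 = v $ 2"
  unfolding pair_def e2_def by (simp add: sum_2)

lemma vec2_eq_0_iff: "(x :: vec2) = 0 \<longleftrightarrow> x $ 1 = 0 \<and> x $ 2 = 0"
  by (simp add: vec_eq_iff forall_2)

lemma ex_pair_nonzero:
  assumes "finite R" and "0 \<notin> R"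
  shows "\<exists>u. u \<noteq> 0 \<and> (\<forall>r\<in>R. pair r u \<noteq> 0)"
proof -
  have "(0, 0) \<notin> (\<lambda>r. (r $ 1, r $ 2)) ` R"
    using assms(2) by (auto simp: image_iff) (metis vec2_eq_0_iff)
  then obtain z where z: "\<forall>r\<in>R. r $ 1 + r $ 2 * z \<noteq> 0"
    using ex_avoiding_affine_zeros[of "(\<lambda>r. (r $ 1, r $ 2)) ` R"] assms(1) by auto
  show ?thesis
  proof (intro exI conjI ballI)
    show "vector [1, z] \<noteq> (0 :: vec2)"
      by (simp add: vec2_eq_0_iff)
    show "pair r (vector [1, z]) \<noteq> 0" if "r \<in> R" for r
      using z that by (simp add: pair_def sum_2)
  qed
qed

definition shear :: "complex \<Rightarrow> mat2" where
  "shear z = (\<chi> i j. if i = j then 1 else if i = 1 then z else 0)"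

lemma shear_mult_shear_uminus: "shear z ** shear (- z) = mat 1" "shear (- z) ** shear z = mat 1"
  unfolding shear_def by (simp_all add: vec_eq_iff forall_2 sum_2 matrix_matrix_mult_def mat_def)

lemma invertible_shear: "invertible (shear z)"
  using shear_mult_shear_uminus invertible_def by blast

lemma matrix_inv_shear: "matrix_inv (shear z) = shear (- z)"
  by (rule matrix_inv_unique) (rule shear_mult_shear_uminus)+

lemma shear_SL2: "shear z \<in> SL2"
  unfolding SL2_def shear_def by (simp add: det_2)

lemma shear_mult_vector_1: "(shear z *v u) $ 1 = u $ 1 + z * u $ 2"
  unfolding shear_def by (simp add: matrix_vector_mult_def sum_2)

lemma vector_mult_shear_2: "(v v* shear z) $ 2 = v $ 2 + v $ 1 * z"
  unfolding shear_def by (simp add: vector_matrix_mult_def sum_2)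

lemma ex_shear_avoiding:
  assumes "finite S" "0 \<notin> S" "finite R" "0 \<notin> R"
  shows "\<exists>z. (\<forall>u\<in>S. (matrix_inv (shear z) *v u) $ 1 \<noteq> 0) \<and> (\<forall>v\<in>R. (v v* shear z) $ 2 \<noteq> 0)"
proof -
  let ?S = "(\<lambda>u. (u $ 1, - u $ 2)) ` S \<union> (\<lambda>v. (v $ 2, v $ 1)) ` R"
  have "(0, 0) \<notin> ?S"
    using assms(2,4) by (auto simp: image_iff) (metis neg_equal_0_iff_equal vec2_eq_0_iff)+
  then obtain z where z: "\<forall>(a, b)\<in>?S. a + b * z \<noteq> 0"
    using ex_avoiding_affine_zeros[of ?S] assms(1,3) by auto
  have "u $ 1 + - z * u $ 2 \<noteq> 0" if "u \<in> S" for u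
    using bspec[OF z, of "(u $ 1, - u $ 2)"] that by (auto simp: mult.commute)
  moreover have "v $ 2 + v $ 1 * z \<noteq> 0" if "v \<in> R" for v
    using bspec[OF z, of "(v $ 2, v $ 1)"] that by auto
  ultimately show ?thesis
    by (intro exI[of _ z]) (simp add: matrix_inv_shear shear_mult_vector_1 vector_mult_shear_2)
qed

lemma admissible_conj:
  assumes gen: "\<And>s. s \<in> diagram_points os0 w \<Longrightarrow> L s = {c *s V s | c. True}"
    and h: "invertible h"
    and det: "\<And>s. s \<in> diagram_gaps os0 w \<Longrightarrow> (matrix_inv h *v U s) $ 1 \<noteq> 0"
    and e2: "\<And>s. s \<in> diagram_points os0 w \<Longrightarrow> (V s v* h) $ 2 \<noteq> 0"
    and up: "\<And>t p. (t, p) \<in> diagram_points os0 w \<Longrightarrow>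
               pair (V (t, p)) (U (t, up_gap (ori os0 w t) p)) \<noteq> 0"
  shows "admissible os0 w (\<lambda>s. line_act (L s) h) (\<lambda>s. matrix_inv h *v U s)"
  unfolding admissible_def
proof (intro allI impI conjI ballI)
  fix t j assume "t \<le> length w" "j \<le> length (ori os0 w t)"
  then show "det_cols (matrix_inv h *v U (t, j)) e2 \<noteq> 0"
    using det by (simp add: det_cols_e2 diagram_gaps_def)
next
  fix t p v
  assume "t \<le> length w" "p < length (ori os0 w t)"
    and v: "v \<in> line_act (L (t, p)) h" "v \<noteq> 0"
  then have tp: "(t, p) \<in> diagram_points os0 w"
    by (simp add: diagram_points_def)
  have "\<exists>c. v = c *s (V (t, p) v* h)"
    using v(1) gen[OF tp] by (auto simp: line_act_def scalar_vector_matrix_assoc)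
  then obtain c where c: "v = c *s (V (t, p) v* h)" ..
  then have "c \<noteq> 0"
    using v(2) by auto
  then show "pair v e2 \<noteq> 0"
    using c e2[OF tp] by (simp add: pair_e2)
  have "pair v (matrix_inv h *v U (t, up_gap (ori os0 w t) p))
      = c * pair (V (t, p)) (U (t, up_gap (ori os0 w t) p))"
    using h by (simp add: c pair_scalar_mult_left pair_matrix_vector_mult scalar_vector_matrix_assoc
        vector_matrix_mul_assoc matrix_inv_right)
  then show "pair v (matrix_inv h *v U (t, up_gap (ori os0 w t) p)) \<noteq> 0"
    using \<open>c \<noteq> 0\<close> up[OF tp] by simp
qed

lemma shadow_coloring_nonzero:
  "shadow_coloring os0 w G U \<Longrightarrow> s \<in> diagram_gaps os0 w \<Longrightarrow> U s \<noteq> 0"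
  unfolding shadow_coloring_def diagram_gaps_def by auto

lemma ex_shadow_coloring_pair_nonzero:
  assumes wf: "wf_diagram os0 w" and dc: "decorated_coloring os0 w G L"
    and V: "\<And>s. s \<in> diagram_points os0 w \<Longrightarrow> V s \<noteq> 0"
  obtains U where "shadow_coloring os0 w G U"
    and "\<And>t p. (t, p) \<in> diagram_points os0 w \<Longrightarrow> pair (V (t, p)) (U (t, up_gap (ori os0 w t) p)) \<noteq> 0"
proof -
  define P where "P = (\<lambda>(t, j). gap_transfer G (ori os0 w t) t j)"
  have P_inv: "invertible (P s)" if "s \<in> diagram_gaps os0 w" for s
    using that decorated_coloring_invertible[OF dc]
    by (auto simp: P_def diagram_gaps_def diagram_points_def intro!: invertible_gap_transfer)
  let ?R = "(\<lambda>(t, p). V (t, p) v* P (t, up_gap (ori os0 w t) p)) ` diagram_points os0 w"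
  have "0 \<notin> ?R"
  proof
    assume "0 \<in> ?R"
    then obtain t p where tp: "(t, p) \<in> diagram_points os0 w"
      and "V (t, p) v* P (t, up_gap (ori os0 w t) p) = 0"
      by auto
    then show False
      using V[OF tp] P_inv[OF up_gap_in_diagram_gaps[OF tp]] invertible_vector_mult_nonzero by blast
  qed
  then obtain u0 where u0: "u0 \<noteq> 0" "\<forall>r\<in>?R. pair r u0 \<noteq> 0"
    using ex_pair_nonzero[of ?R] finite_diagram_points by blast
  show thesis
  proof
    show "shadow_coloring os0 w G (\<lambda>s. P s *v u0)"
      using shadow_coloring_gap_transfer[OF wf dc u0(1)] by (simp add: P_def case_prod_unfold)
    show "pair (V (t, p)) (P (t, up_gap (ori os0 w t) p) *v u0) \<noteq> 0"
      if "(t, p) \<in> diagram_points os0 w" for t p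
      using u0(2) that by (auto simp: pair_matrix_vector_mult)
  qed
qed

theorem theoremB:
  fixes os0 :: "bool list" and w :: "elem list"
    and G :: "nat \<times> nat \<Rightarrow> mat2" and L :: "nat \<times> nat \<Rightarrow> vec2 set"
  assumes "wf_diagram os0 w"
    and "decorated_coloring os0 w G L"
  shows "\<exists>h\<in>SL2. \<exists>U.
           shadow_coloring os0 w (\<lambda>s. matrix_inv h ** G s ** h) U \<and>
           admissible os0 w (\<lambda>s. line_act (L s) h) U"
proof -
  obtain V where V: "\<And>s. s \<in> diagram_points os0 w \<Longrightarrow> V s \<noteq> 0 \<and> L s = {c *s V s | c. True}"
    using decorated_coloring_line_generators[OF assms(2)] by blast
  obtain U where sc: "shadow_coloring os0 w G U"
    and up: "\<And>t p. (t, p) \<in> diagram_points os0 w \<Longrightarrow> pair (V (t, p)) (U (t, up_gap (ori os0 w t) p)) \<noteq> 0"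
    using ex_shadow_coloring_pair_nonzero[OF assms] V by blast
  have "0 \<notin> U ` diagram_gaps os0 w" and "0 \<notin> V ` diagram_points os0 w"
    using shadow_coloring_nonzero[OF sc] V by fastforce+
  then obtain z where z: "\<forall>u\<in>U ` diagram_gaps os0 w. (matrix_inv (shear z) *v u) $ 1 \<noteq> 0"
      "\<forall>v\<in>V ` diagram_points os0 w. (v v* shear z) $ 2 \<noteq> 0"
    using ex_shear_avoiding finite_diagram_gaps finite_diagram_points by (metis finite_imageI)
  have "shadow_coloring os0 w (\<lambda>s. matrix_inv (shear z) ** G s ** shear z)
      (\<lambda>s. matrix_inv (shear z) *v U s)"
    by (rule shadow_coloring_conj[OF sc invertible_shear])
  moreover have "admissible os0 w (\<lambda>s. line_act (L s) (shear z)) (\<lambda>s. matrix_inv (shear z) *v U s)"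
    using V z up by (intro admissible_conj invertible_shear) auto
  ultimately show ?thesis
    using shear_SL2 by blast
qed

end
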